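(* Consider the speed scaling model under Assumption A1 with cost $c(x,u)=x+\tfrac12u^2$, let $K^*(x)=\alpha x+\tfrac13[(2x+\alpha^2)^{3/2}-\alpha^3]$, let $\mathcal{E}_B(x)=\min_{0\le u\le x}\bigl(c(x,u)+\mathsf{E}[K^*(x-u+A(1))]-K^*(x)\bigr)$ be its Bellman error, and let $\phi^{K^*}$ be the $(c,K^* )$-myopic policy (a minimizer in this expression). With $\tau_0=\min\{t\ge1:X(t)=0\}$, there exist constants $b_1,b_2$ such that for all $x\ge0$, \[ \mathsf{E}^{\phi^{K^*}}_x\Bigl[\sum_{t=0}^{\tau_0-1}\mathcal{E}_B(X(t))\Bigr]\le b_1x+b_2, \] where $\mathsf{E}^{\phi^{K^*}}_x$ is expectation for the chain started at $x$ under the stationary policy $\phi^{K^*}$.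
   Context: Speed scaling MDP: $X(t+1)=X(t)-U(t)+A(t+1)$, $t\ge0$, with $X(t)\in\mathbb{R}_+$ and $0\le U(t)\le X(t)$. Assumption A1: the arrival process $A$ is i.i.d., its marginal distribution is supported on $\mathbb{R}_+$ with finite mean $\alpha>0$, $\mathsf{P}\{A(1)=0\}>0$, and there is $N>0$ with $\mathsf{P}\{A(1)<N\}=1$. *)

theory Defs
  imports "HOL-Probability.Probability"
begin

text \<open>Arrival law: mu is the marginal distribution of A(1), a probability measure on the reals.
  The i.i.d. arrival sequence A(1), A(2), ... is modelled by a stream w drawn from
  stream_space mu, with snth w t = A(t+1).\<close>

definition arr_mean :: "real measure \<Rightarrow> real" where
  "arr_mean mu = (\<integral>a. a \<partial>mu)"

definition cost :: "real \<Rightarrow> real \<Rightarrow> real" where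
  "cost x u = x + (1/2) * u\<^sup>2"

definition Kstar :: "real \<Rightarrow> real \<Rightarrow> real" where
  "Kstar \<alpha> x = \<alpha> * x + (1/3) * ((2 * x + \<alpha>\<^sup>2) powr (3/2) - \<alpha> ^ 3)"

definition bellman_obj :: "real measure \<Rightarrow> real \<Rightarrow> real \<Rightarrow> real" where
  "bellman_obj mu x u =
     cost x u + (\<integral>a. Kstar (arr_mean mu) (x - u + a) \<partial>mu) - Kstar (arr_mean mu) x"

definition bellman_err :: "real measure \<Rightarrow> real \<Rightarrow> real" where
  "bellman_err mu x = Inf (bellman_obj mu x ` {0..x})"

fun Xpath :: "(real \<Rightarrow> real) \<Rightarrow> real \<Rightarrow> real stream \<Rightarrow> nat \<Rightarrow> real" where
  "Xpath phi x w 0 = x"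
| "Xpath phi x w (Suc t) = Xpath phi x w t - phi (Xpath phi x w t) + snth w t"

definition tau0 :: "(real \<Rightarrow> real) \<Rightarrow> real \<Rightarrow> real stream \<Rightarrow> enat" where
  "tau0 phi x w =
     (if \<exists>t\<ge>1. Xpath phi x w t = 0
      then enat (LEAST t. t \<ge> 1 \<and> Xpath phi x w t = 0) else \<infinity>)"

end

theory Submission
  imports Defs
begin

text \<open>K* is the value function of the fluid model x' = -u + \<alpha> with cost c; it solves the fluid
  Bellman equation, and its tangent gaps over a step of length O(N + u) are
  O((N + u)^2 / sqrt (2x + \<alpha>^2)). Hence the Bellman error grows only like sqrt x, and the
  myopic policy stays close to the fluid-optimal rate K*'(x) \<approx> sqrt (2x), so that from large
  states it drains the queue at rate at least of order sqrt x. Consequently V(x) = b1 x + b2 satisfies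
  the drift inequality E[V(X(1)); X(1) \<noteq> 0] \<le> V(x) - E_B(x) (the atom of the arrivals at 0
  pays for small states, where the policy empties the queue), and the comparison theorem bounds
  the accumulated Bellman error before the return to 0 by V(x). Monotonicity of the policy, which
  follows from submodularity and strict convexity of the Bellman objective, provides measurability.\<close>

definition Kstar_deriv :: "real \<Rightarrow> real \<Rightarrow> real" where
  "Kstar_deriv \<alpha> y = \<alpha> + sqrt (2*y + \<alpha>\<^sup>2)"

lemma Kstar_sqrt_eq:
  assumes "0 \<le> 2*y + \<alpha>\<^sup>2"
  shows "Kstar \<alpha> y = \<alpha>*y + ((2*y + \<alpha>\<^sup>2) * sqrt (2*y + \<alpha>\<^sup>2) - \<alpha>^3) / 3"
proof -
  have "s powr (3/2) = s * sqrt s" if "0 \<le> s" for s :: real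
    using that powr_add[of s 1 "1/2"] by (simp add: powr_half_sqrt)
  thus ?thesis using assms by (simp add: Kstar_def)
qed

lemma Kstar_tangent_gap:
  fixes \<alpha> y z :: real
  assumes "0 \<le> y" "0 \<le> z"
  defines "p \<equiv> sqrt (2*y + \<alpha>\<^sup>2)" and "q \<equiv> sqrt (2*z + \<alpha>\<^sup>2)"
  shows "Kstar \<alpha> z - Kstar \<alpha> y - Kstar_deriv \<alpha> y * (z - y) = (q - p)\<^sup>2 * (2*q + p) / 6"
proof -
  have p2: "p\<^sup>2 = 2*y + \<alpha>\<^sup>2" and q2: "q\<^sup>2 = 2*z + \<alpha>\<^sup>2"
    using assms by (simp_all add: add_nonneg_nonneg)
  have "Kstar \<alpha> z - Kstar \<alpha> y - Kstar_deriv \<alpha> y * (z - y) = (q\<^sup>2*q - p\<^sup>2*p)/3 - p*(z - y)"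
    using Kstar_sqrt_eq[of y \<alpha>] Kstar_sqrt_eq[of z \<alpha>] assms
    by (simp add: Kstar_deriv_def p2 q2 add_nonneg_nonneg field_simps)
  also have "\<dots> = (q\<^sup>2*q - p\<^sup>2*p)/3 - p*((q\<^sup>2 - p\<^sup>2)/2)"
    by (simp add: p2 q2)
  also have "\<dots> = (q - p)\<^sup>2 * (2*q + p) / 6"
    by (simp add: power2_eq_square field_simps)
  finally show ?thesis .
qed

lemma Kstar_above_tangent:
  assumes "0 \<le> y" "0 \<le> z"
  shows "Kstar_deriv \<alpha> y * (z - y) \<le> Kstar \<alpha> z - Kstar \<alpha> y"
proof -
  have "0 \<le> (sqrt (2*z + \<alpha>\<^sup>2) - sqrt (2*y + \<alpha>\<^sup>2))\<^sup>2
      * (2 * sqrt (2*z + \<alpha>\<^sup>2) + sqrt (2*y + \<alpha>\<^sup>2)) / 6"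
    using assms by (intro divide_nonneg_nonneg mult_nonneg_nonneg add_nonneg_nonneg) auto
  thus ?thesis using Kstar_tangent_gap[OF assms, of \<alpha>] by linarith
qed

lemma Kstar_tangent_gap_le:
  assumes "0 \<le> y" "0 \<le> z"
  shows "(Kstar \<alpha> z - Kstar \<alpha> y - Kstar_deriv \<alpha> y * (z - y)) * sqrt (2*y + \<alpha>\<^sup>2)
           \<le> 4/3 * (z - y)\<^sup>2"
proof -
  define p where "p = sqrt (2*y + \<alpha>\<^sup>2)"
  define q where "q = sqrt (2*z + \<alpha>\<^sup>2)"
  have pq: "0 \<le> p" "0 \<le> q" unfolding p_def q_def using assms by simp_all
  have "p\<^sup>2 = 2*y + \<alpha>\<^sup>2" "q\<^sup>2 = 2*z + \<alpha>\<^sup>2"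
    unfolding p_def q_def using assms by (simp_all add: add_nonneg_nonneg)
  hence "z - y = (q - p) * (q + p) / 2"
    by (simp add: power2_eq_square algebra_simps)
  hence zy: "(z - y)\<^sup>2 = (q - p)\<^sup>2 * (q + p)\<^sup>2 / 4"
    by (simp only: power_mult_distrib power_divide) simp
  have "(2*q + p) * p \<le> 2 * (q + p)\<^sup>2"
    using pq by (simp add: power2_eq_square algebra_simps)
  hence "(q - p)\<^sup>2 * ((2*q + p) * p) \<le> (q - p)\<^sup>2 * (2 * (q + p)\<^sup>2)"
    by (rule mult_left_mono) simp
  thus ?thesis
    unfolding Kstar_tangent_gap[OF assms, of \<alpha>, folded p_def q_def] zy p_def[symmetric]
    by (simp add: algebra_simps)
qed

lemma Kstar_deriv_ge: "0 \<le> y \<Longrightarrow> 2*\<alpha> \<le> Kstar_deriv \<alpha> y"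
  using real_sqrt_le_mono[of "\<alpha>\<^sup>2" "2*y + \<alpha>\<^sup>2"] by (simp add: Kstar_deriv_def)

lemma Kstar_deriv_mono: "y \<le> z \<Longrightarrow> Kstar_deriv \<alpha> y \<le> Kstar_deriv \<alpha> z"
  by (simp add: Kstar_deriv_def)

lemma Kstar_increment_mono:
  assumes "0 \<le> q" "0 \<le> d" "q \<le> p"
  shows "Kstar \<alpha> (q + d) - Kstar \<alpha> q \<le> Kstar \<alpha> (p + d) - Kstar \<alpha> p"
proof -
  have *: "Kstar \<alpha> (s + e) - Kstar \<alpha> s \<le> Kstar \<alpha> (r + e) - Kstar \<alpha> r"
    if "0 \<le> s" "0 \<le> e" "s + e \<le> r" for s e r
  proof -
    have "Kstar \<alpha> (s + e) - Kstar \<alpha> s \<le> Kstar_deriv \<alpha> (s + e) * e"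
      using Kstar_above_tangent[of "s + e" s \<alpha>] that by simp
    also have "\<dots> \<le> Kstar_deriv \<alpha> r * e"
      using that by (intro mult_right_mono Kstar_deriv_mono) auto
    also have "\<dots> \<le> Kstar \<alpha> (r + e) - Kstar \<alpha> r"
      using Kstar_above_tangent[of r "r + e" \<alpha>] that by simp
    finally show ?thesis .
  qed
  show ?thesis
  proof (cases "q + d \<le> p")
    case True
    thus ?thesis using *[of q d p] assms by simp
  next
    case False
    thus ?thesis using *[of q "p - q" "q + d"] assms by (simp add: algebra_simps)
  qed
qed

lemma Kstar_midpoint_convex:
  assumes "0 \<le> s" "0 \<le> t"
  shows "2 * Kstar \<alpha> ((s + t)/2) \<le> Kstar \<alpha> s + Kstar \<alpha> t"
proof -
  have m: "0 \<le> (s + t)/2" using assms by simp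
  have "Kstar_deriv \<alpha> ((s + t)/2) * (s - (s + t)/2) + Kstar_deriv \<alpha> ((s + t)/2) * (t - (s + t)/2) = 0"
    by (simp add: algebra_simps)
  thus ?thesis
    using Kstar_above_tangent[OF m assms(1), of \<alpha>] Kstar_above_tangent[OF m assms(2), of \<alpha>]
    by linarith
qed

lemma Xpath_Suc_Cons: "Xpath f x (a ## w) (Suc t) = Xpath f (x - f x + a) w t"
  by (induction t) auto

definition avoids_zero :: "(real \<Rightarrow> real) \<Rightarrow> real \<Rightarrow> real stream \<Rightarrow> nat \<Rightarrow> bool" where
  "avoids_zero f x w t \<longleftrightarrow> (\<forall>s\<in>{1..t}. Xpath f x w s \<noteq> 0)"

lemma avoids_zero_Suc_Cons:
  "avoids_zero f x (a ## w) (Suc t) \<longleftrightarrow>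
     x - f x + a \<noteq> 0 \<and> avoids_zero f (x - f x + a) w t"
proof -
  have "avoids_zero f x (a ## w) (Suc t) \<longleftrightarrow> (\<forall>s\<in>{..t}. Xpath f (x - f x + a) w s \<noteq> 0)"
    unfolding avoids_zero_def image_Suc_atMost[symmetric]
    by (simp add: Xpath_Suc_Cons del: Xpath.simps(2))
  also have "\<dots> \<longleftrightarrow> x - f x + a \<noteq> 0 \<and> avoids_zero f (x - f x + a) w t"
  proof -
    have "{..t} = insert 0 {1..t}" by auto
    thus ?thesis unfolding avoids_zero_def by simp
  qed
  finally show ?thesis .
qed

lemma less_tau0_iff_avoids_zero: "enat t < tau0 f x w \<longleftrightarrow> avoids_zero f x w t"
proof (cases "\<exists>t\<ge>1. Xpath f x w t = 0")
  case True
  define L where "L = (LEAST t. 1 \<le> t \<and> Xpath f x w t = 0)"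
  have L: "1 \<le> L" "Xpath f x w L = 0"
    using LeastI_ex[OF True] unfolding L_def by auto
  have "avoids_zero f x w t \<longleftrightarrow> t < L"
  proof
    assume "avoids_zero f x w t"
    thus "t < L" using L unfolding avoids_zero_def by (meson atLeastAtMost_iff not_le)
  next
    assume "t < L"
    show "avoids_zero f x w t"
      unfolding avoids_zero_def
    proof
      fix s assume s: "s \<in> {1..t}"
      with \<open>t < L\<close> have "s < L" by simp
      thus "Xpath f x w s \<noteq> 0"
        using s not_less_Least[of s "\<lambda>t. 1 \<le> t \<and> Xpath f x w t = 0"] unfolding L_def by auto
    qed
  qed
  thus ?thesis using True by (simp add: tau0_def L_def)
next
  case False
  thus ?thesis by (auto simp: tau0_def avoids_zero_def)
qed

definition path_cost ::
    "(real \<Rightarrow> real) \<Rightarrow> (real \<Rightarrow> real) \<Rightarrow> real \<Rightarrow> real stream \<Rightarrow> nat \<Rightarrow> ennreal"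
  where "path_cost f g x w n = (\<Sum>t<n. if avoids_zero f x w t then ennreal (g (Xpath f x w t)) else 0)"

lemma path_cost_Suc_Cons:
  "path_cost f g x (a ## w) (Suc n) =
     ennreal (g x) + (if x - f x + a = 0 then 0 else path_cost f g (x - f x + a) w n)"
  unfolding path_cost_def sum.lessThan_Suc_shift avoids_zero_Suc_Cons Xpath_Suc_Cons
  by (simp add: avoids_zero_def del: Xpath.simps(2))

lemma Xpath_eq_on_nonneg:
  assumes agree: "\<And>y. 0 \<le> y \<Longrightarrow> psi y = phi y" and le: "\<And>y. 0 \<le> y \<Longrightarrow> phi y \<le> y"
    and x: "0 \<le> x" and w: "\<And>n. 0 \<le> w !! n"
  shows "Xpath phi x w t = Xpath psi x w t \<and> 0 \<le> Xpath phi x w t"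
proof (induction t)
  case (Suc t)
  thus ?case using agree le[of "Xpath phi x w t"] w[of t] by simp
qed (use x in simp)

locale nonneg_arrivals = prob_space mu for mu :: "real measure" +
  assumes sets_mu: "sets mu = sets borel"
    and nonneg: "AE a in mu. 0 \<le> a"
begin

lemma measurable_snth_arrivals[measurable]:
  "(\<lambda>w. w !! n) \<in> borel_measurable (stream_space mu)"
  using measurable_snth[of n mu] unfolding measurable_cong_sets[OF refl sets_mu] .

lemma AE_arrivals_nonneg: "AE w in stream_space mu. \<forall>n. 0 \<le> w !! n"
proof -
  have "Measurable.pred mu (\<lambda>a. 0 \<le> a)"
    unfolding measurable_cong_sets[OF sets_mu refl] by measurable
  from AE_stream_all[OF this nonneg] show ?thesis
    by (simp only: stream_all_def)
qed

context
  fixes psi f :: "real \<Rightarrow> real"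
  assumes psi_meas[measurable]: "psi \<in> borel_measurable borel"
    and f_meas[measurable]: "f \<in> borel_measurable borel"
begin

lemma measurable_Xpath[measurable]:
  "(\<lambda>w. Xpath psi x w t) \<in> borel_measurable (stream_space mu)"
  by (induction t) simp_all

lemma measurable_path_cost[measurable]:
  "(\<lambda>w. path_cost psi f x w n) \<in> borel_measurable (stream_space mu)"
  unfolding path_cost_def avoids_zero_def by measurable

lemma nn_integral_path_cost_le:
  fixes V :: "real \<Rightarrow> ennreal"
  assumes V_meas[measurable]: "V \<in> borel_measurable borel"
    and psi_le: "\<And>y. 0 \<le> y \<Longrightarrow> psi y \<le> y"
    and drift: "\<And>y. 0 \<le> y \<Longrightarrow>
       ennreal (f y) + (\<integral>\<^sup>+a. (if y - psi y + a = 0 then 0 else V (y - psi y + a)) \<partial>mu) \<le> V y"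
  shows "0 \<le> x \<Longrightarrow> (\<integral>\<^sup>+w. path_cost psi f x w n \<partial>stream_space mu) \<le> V x"
proof (induction n arbitrary: x)
  case 0
  show ?case by (simp add: path_cost_def)
next
  case (Suc n)
  interpret S: prob_space "stream_space mu" by (rule prob_space_stream_space)
  define next_cost where "next_cost a =
    (if x - psi x + a = 0 then 0 else \<integral>\<^sup>+w. path_cost psi f (x - psi x + a) w n \<partial>stream_space mu)"
    for a
  have "(\<integral>\<^sup>+w. path_cost psi f x w (Suc n) \<partial>stream_space mu)
      = (\<integral>\<^sup>+a. (\<integral>\<^sup>+w. path_cost psi f x (a ## w) (Suc n) \<partial>stream_space mu) \<partial>mu)"
    by (rule nn_integral_stream_space) measurable
  also have "\<dots> = (\<integral>\<^sup>+a. ennreal (f x) + next_cost a \<partial>mu)"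
    by (intro nn_integral_cong)
      (simp add: path_cost_Suc_Cons next_cost_def nn_integral_add S.emeasure_space_1)
  also have "\<dots> \<le> (\<integral>\<^sup>+a. ennreal (f x) + (if x - psi x + a = 0 then 0 else V (x - psi x + a)) \<partial>mu)"
    using nonneg
  proof (intro nn_integral_mono_AE, eventually_elim)
    case (elim a)
    hence "0 \<le> x - psi x + a" using psi_le[OF Suc.prems] by simp
    thus ?case using Suc.IH unfolding next_cost_def by (auto intro: add_left_mono)
  qed
  also have "\<dots> = ennreal (f x) + (\<integral>\<^sup>+a. (if x - psi x + a = 0 then 0 else V (x - psi x + a)) \<partial>mu)"
    by (subst nn_integral_add)
      (auto simp: measurable_cong_sets[OF sets_mu refl] emeasure_space_1)
  also have "\<dots> \<le> V x"
    by (rule drift[OF Suc.prems])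
  finally show ?case .
qed

lemma nn_integral_cost_until_tau0_le:
  fixes V :: "real \<Rightarrow> ennreal"
  assumes "V \<in> borel_measurable borel"
    and "\<And>y. 0 \<le> y \<Longrightarrow> psi y \<le> y"
    and "\<And>y. 0 \<le> y \<Longrightarrow>
       ennreal (f y) + (\<integral>\<^sup>+a. (if y - psi y + a = 0 then 0 else V (y - psi y + a)) \<partial>mu) \<le> V y"
    and "0 \<le> x"
  shows "(\<integral>\<^sup>+w. (\<Sum>t. if enat t < tau0 psi x w then ennreal (f (Xpath psi x w t)) else 0)
            \<partial>stream_space mu) \<le> V x"
proof -
  have "(\<integral>\<^sup>+w. (\<Sum>t. if enat t < tau0 psi x w then ennreal (f (Xpath psi x w t)) else 0)
            \<partial>stream_space mu) = (\<integral>\<^sup>+w. (SUP n. path_cost psi f x w n) \<partial>stream_space mu)"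
    by (simp add: path_cost_def less_tau0_iff_avoids_zero suminf_eq_SUP)
  also have "\<dots> = (SUP n. \<integral>\<^sup>+w. path_cost psi f x w n \<partial>stream_space mu)"
  proof (rule nn_integral_monotone_convergence_SUP)
    show "incseq (\<lambda>n w. path_cost psi f x w n)"
      by (auto simp: incseq_def le_fun_def path_cost_def intro!: sum_mono2)
  qed measurable
  also have "\<dots> \<le> V x"
    using nn_integral_path_cost_le[OF assms] by (intro SUP_least)
  finally show ?thesis .
qed

end

end

locale bounded_arrivals = nonneg_arrivals +
  fixes N :: real
  assumes N_pos: "0 < N"
    and bounded: "AE a in mu. a < N"
    and mean_pos: "0 < arr_mean mu"
begin

abbreviation \<alpha> :: real where "\<alpha> \<equiv> arr_mean mu"

lemma integrable_arrival: "integrable mu (\<lambda>a. a)"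
proof (rule integrable_const_bound)
  show "AE a in mu. norm a \<le> N"
    using nonneg bounded by eventually_elim simp
qed (simp add: measurable_cong_sets[OF sets_mu refl])

lemma integral_arrival: "(\<integral>a. a \<partial>mu) = \<alpha>"
  by (simp add: arr_mean_def)

lemma nn_integral_affine_arrival:
  assumes "0 \<le> A" "0 \<le> B" "0 \<le> c"
  shows "(\<integral>\<^sup>+a. ennreal (A * (c + a) + B) \<partial>mu) = ennreal (A * (c + \<alpha>) + B)"
proof -
  have "(\<integral>\<^sup>+a. ennreal (A * (c + a) + B) \<partial>mu) = ennreal (\<integral>a. A * (c + a) + B \<partial>mu)"
    using nonneg assms integrable_arrival
    by (intro nn_integral_eq_integral) (auto elim: eventually_mono)
  also have "(\<integral>a. A * (c + a) + B \<partial>mu) = A * (c + \<alpha>) + B"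
    using integrable_arrival by (simp add: integral_arrival prob_space algebra_simps)
  finally show ?thesis .
qed

lemma Kstar_tangent_gap_AE:
  assumes "0 \<le> u" "u \<le> y"
  shows "AE a in mu. 0 \<le> Kstar \<alpha> (y - u + a) - Kstar \<alpha> y - Kstar_deriv \<alpha> y * (a - u) \<and>
     Kstar \<alpha> (y - u + a) - Kstar \<alpha> y - Kstar_deriv \<alpha> y * (a - u)
       \<le> 4/3 * (N + u)\<^sup>2 / sqrt (2*y + \<alpha>\<^sup>2)"
  using nonneg bounded
proof eventually_elim
  case (elim a)
  define gap where "gap = Kstar \<alpha> (y - u + a) - Kstar \<alpha> y - Kstar_deriv \<alpha> y * (a - u)"
  have y: "0 \<le> y" and z: "0 \<le> y - u + a" using elim assms by auto
  have sqrt_pos: "0 < sqrt (2*y + \<alpha>\<^sup>2)" using mean_pos y by (simp add: add_nonneg_pos)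
  have "(N + u)\<^sup>2 - (a - u)\<^sup>2 = (N + a) * (N + 2*u - a)" by (simp add: power2_eq_square algebra_simps)
  moreover have "0 \<le> (N + a) * (N + 2*u - a)" using elim assms N_pos by simp
  ultimately have "(a - u)\<^sup>2 \<le> (N + u)\<^sup>2" by linarith
  hence "gap * sqrt (2*y + \<alpha>\<^sup>2) \<le> 4/3 * (N + u)\<^sup>2"
    using Kstar_tangent_gap_le[OF y z, of \<alpha>] unfolding gap_def by simp
  hence "gap \<le> 4/3 * (N + u)\<^sup>2 / sqrt (2*y + \<alpha>\<^sup>2)"
    using sqrt_pos by (simp add: pos_le_divide_eq)
  moreover have "0 \<le> gap" using Kstar_above_tangent[OF y z, of \<alpha>] unfolding gap_def by simp
  ultimately show ?case unfolding gap_def by simp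
qed

lemma integrable_Kstar_shift:
  assumes "0 \<le> u" "u \<le> y"
  shows "integrable mu (\<lambda>a. Kstar \<alpha> (y - u + a))"
proof -
  define gap where "gap a = Kstar \<alpha> (y - u + a) - Kstar \<alpha> y - Kstar_deriv \<alpha> y * (a - u)" for a
  have "AE a in mu. norm (gap a) \<le> 4/3 * (N + u)\<^sup>2 / sqrt (2*y + \<alpha>\<^sup>2)"
    using Kstar_tangent_gap_AE[OF assms] unfolding gap_def by eventually_elim auto
  moreover have "gap \<in> borel_measurable mu"
    unfolding gap_def measurable_cong_sets[OF sets_mu refl] Kstar_def by measurable
  ultimately have "integrable mu gap" by (rule integrable_const_bound)
  hence "integrable mu (\<lambda>a. gap a + Kstar \<alpha> y + Kstar_deriv \<alpha> y * (a - u))"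
    using integrable_arrival by auto
  thus ?thesis unfolding gap_def by simp
qed

text \<open>Up to the mean tangent gap of K*, the Bellman objective is (u - K*'(y))^2 / 2;
  this is the fluid Bellman equation y + \<alpha> K*'(y) = K*'(y)^2 / 2 solved by K*.\<close>

lemma bellman_obj_bounds:
  assumes "0 \<le> u" "u \<le> y"
  shows "(u - Kstar_deriv \<alpha> y)\<^sup>2 / 2 \<le> bellman_obj mu y u"
    and "bellman_obj mu y u \<le> (u - Kstar_deriv \<alpha> y)\<^sup>2 / 2 + 4/3 * (N + u)\<^sup>2 / sqrt (2*y + \<alpha>\<^sup>2)"
proof -
  define gap where "gap a = Kstar \<alpha> (y - u + a) - Kstar \<alpha> y - Kstar_deriv \<alpha> y * (a - u)" for a
  define bound where "bound = 4/3 * (N + u)\<^sup>2 / sqrt (2*y + \<alpha>\<^sup>2)"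
  have iK: "integrable mu (\<lambda>a. Kstar \<alpha> (y - u + a))" by (rule integrable_Kstar_shift[OF assms])
  have "(\<integral>a. gap a \<partial>mu)
      = (\<integral>a. Kstar \<alpha> (y - u + a) \<partial>mu) - Kstar \<alpha> y - Kstar_deriv \<alpha> y * (\<alpha> - u)"
    unfolding gap_def using iK integrable_arrival
    by (simp add: Bochner_Integration.integral_diff integral_arrival prob_space)
  moreover have "y + u\<^sup>2/2 + Kstar_deriv \<alpha> y * (\<alpha> - u) = (u - Kstar_deriv \<alpha> y)\<^sup>2 / 2"
    using assms by (simp add: Kstar_deriv_def power2_eq_square add_nonneg_nonneg algebra_simps)
  ultimately have obj: "bellman_obj mu y u = (u - Kstar_deriv \<alpha> y)\<^sup>2 / 2 + (\<integral>a. gap a \<partial>mu)"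
    by (simp add: bellman_obj_def cost_def)
  have gap_AE: "AE a in mu. 0 \<le> gap a \<and> gap a \<le> bound"
    using Kstar_tangent_gap_AE[OF assms] unfolding gap_def bound_def .
  have "integrable mu gap"
    unfolding gap_def using iK integrable_arrival by auto
  hence "(\<integral>a. gap a \<partial>mu) \<le> (\<integral>a. bound \<partial>mu)"
    using gap_AE by (intro integral_mono_AE) auto
  moreover have "0 \<le> (\<integral>a. gap a \<partial>mu)"
    using gap_AE by (intro integral_nonneg_AE) auto
  ultimately show "(u - Kstar_deriv \<alpha> y)\<^sup>2 / 2 \<le> bellman_obj mu y u"
    and "bellman_obj mu y u \<le> (u - Kstar_deriv \<alpha> y)\<^sup>2 / 2 + bound"
    using obj by (simp_all add: prob_space)
qed

lemma bellman_err_le: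
  assumes "0 \<le> u" "u \<le> y"
  shows "bellman_err mu y \<le> bellman_obj mu y u"
  unfolding bellman_err_def
proof (rule cInf_lower)
  show "bellman_obj mu y u \<in> bellman_obj mu y ` {0..y}" using assms by auto
  show "bdd_below (bellman_obj mu y ` {0..y})"
  proof (rule bdd_belowI2)
    fix v assume "v \<in> {0..y}"
    hence "(v - Kstar_deriv \<alpha> y)\<^sup>2 / 2 \<le> bellman_obj mu y v"
      by (intro bellman_obj_bounds(1)) auto
    moreover have "0 \<le> (v - Kstar_deriv \<alpha> y)\<^sup>2 / 2" by simp
    ultimately show "0 \<le> bellman_obj mu y v" by linarith
  qed
qed

lemma sqrt_state_bounds:
  assumes "0 \<le> y"
  shows "(sqrt (2*y + \<alpha>\<^sup>2))\<^sup>2 = 2*y + \<alpha>\<^sup>2"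
    and "\<alpha> \<le> sqrt (2*y + \<alpha>\<^sup>2)" and "0 < sqrt (2*y + \<alpha>\<^sup>2)"
proof -
  show "(sqrt (2*y + \<alpha>\<^sup>2))\<^sup>2 = 2*y + \<alpha>\<^sup>2" using assms by (simp add: add_nonneg_nonneg)
  have "sqrt (\<alpha>\<^sup>2) \<le> sqrt (2*y + \<alpha>\<^sup>2)" using assms by (intro real_sqrt_le_mono) simp
  thus "\<alpha> \<le> sqrt (2*y + \<alpha>\<^sup>2)" using mean_pos by simp
  thus "0 < sqrt (2*y + \<alpha>\<^sup>2)" using mean_pos by linarith
qed

definition err_const :: real where
  "err_const =
     4/3 * ((N + \<alpha>)\<^sup>2/\<alpha> + 2*(N + \<alpha>)) + (2*\<alpha> + 2)\<^sup>2 / 2 + 4/3 * (N + 2*\<alpha> + 2)\<^sup>2/\<alpha>"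

definition err_majorant :: "real \<Rightarrow> real" where
  "err_majorant y = err_const + 4/3 * sqrt (2*y + \<alpha>\<^sup>2)"

lemma err_const_nonneg: "0 \<le> err_const"
  unfolding err_const_def using mean_pos N_pos by simp

lemma err_majorant_mono: "y \<le> z \<Longrightarrow> err_majorant y \<le> err_majorant z"
  unfolding err_majorant_def by simp

lemma err_majorant_nonneg: "0 \<le> y \<Longrightarrow> 0 \<le> err_majorant y"
  unfolding err_majorant_def using err_const_nonneg by (simp add: add_nonneg_nonneg)

text \<open>Compare with the fluid-optimal rate u = K*'(y) when it is feasible, and with u = y otherwise.\<close>

lemma bellman_err_le_majorant:
  assumes y: "0 \<le> y"
  shows "bellman_err mu y \<le> err_majorant y"
proof -
  define p where "p = sqrt (2*y + \<alpha>\<^sup>2)"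
  note p = sqrt_state_bounds[OF y, folded p_def]
  have deriv: "Kstar_deriv \<alpha> y = \<alpha> + p" unfolding Kstar_deriv_def p_def ..
  have const_parts: "0 \<le> (2*\<alpha> + 2)\<^sup>2 / 2" "0 \<le> 4/3 * (N + 2*\<alpha> + 2)\<^sup>2/\<alpha>"
    "0 \<le> 4/3 * ((N + \<alpha>)\<^sup>2/\<alpha> + 2*(N + \<alpha>))" using mean_pos N_pos by auto
  show ?thesis
  proof (cases "Kstar_deriv \<alpha> y \<le> y")
    case True
    have u: "0 \<le> \<alpha> + p" "\<alpha> + p \<le> y" using True deriv p mean_pos by auto
    have "bellman_err mu y \<le> 4/3 * (N + (\<alpha> + p))\<^sup>2 / p"
      using bellman_err_le[OF u] bellman_obj_bounds(2)[OF u] unfolding deriv p_def by simp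
    also have "\<dots> = 4/3 * ((N + \<alpha>)\<^sup>2/p + 2*(N + \<alpha>) + p)"
      using p by (simp add: power2_eq_square field_simps)
    also have "\<dots> \<le> 4/3 * ((N + \<alpha>)\<^sup>2/\<alpha> + 2*(N + \<alpha>) + p)"
      using p mean_pos by (simp add: divide_left_mono)
    also have "\<dots> = 4/3 * ((N + \<alpha>)\<^sup>2/\<alpha> + 2*(N + \<alpha>)) + 4/3 * p"
      by (simp add: algebra_simps)
    also have "\<dots> \<le> err_majorant y"
      unfolding err_majorant_def err_const_def p_def[symmetric] using const_parts by linarith
    finally show ?thesis .
  next
    case False
    have u: "0 \<le> y" "y \<le> y" using y by auto
    have y_lt: "y < \<alpha> + p" using False deriv by simp
    hence "(p - 1)\<^sup>2 < (\<alpha> + 1)\<^sup>2" using p(1) by (simp add: power2_eq_square algebra_simps)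
    hence p_lt: "p < \<alpha> + 2" using mean_pos by (smt (verit) power_mono)
    have "(y - Kstar_deriv \<alpha> y)\<^sup>2 \<le> (2*\<alpha> + 2)\<^sup>2"
      using y_lt deriv y p_lt mean_pos by (intro abs_le_square_iff[THEN iffD1]) auto
    moreover have "(N + y)\<^sup>2/p \<le> (N + 2*\<alpha> + 2)\<^sup>2/\<alpha>"
    proof (rule frac_le)
      show "(N + y)\<^sup>2 \<le> (N + 2*\<alpha> + 2)\<^sup>2" using y_lt p_lt y N_pos by (intro power_mono) auto
    qed (use p mean_pos in auto)
    ultimately have "bellman_err mu y \<le> (2*\<alpha> + 2)\<^sup>2 / 2 + 4/3 * ((N + 2*\<alpha> + 2)\<^sup>2/\<alpha>)"
      using bellman_err_le[OF u] bellman_obj_bounds(2)[OF u] unfolding p_def by simp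
    also have "\<dots> \<le> err_majorant y"
      unfolding err_majorant_def err_const_def p_def[symmetric] using const_parts p by linarith
    finally show ?thesis .
  qed
qed

lemma bellman_obj_diff:
  assumes "0 \<le> u" "u \<le> y" "0 \<le> v" "v \<le> y"
  shows "bellman_obj mu y u - bellman_obj mu y v =
     (u\<^sup>2 - v\<^sup>2)/2 + (\<integral>a. Kstar \<alpha> (y - u + a) - Kstar \<alpha> (y - v + a) \<partial>mu)"
  unfolding bellman_obj_def cost_def
  using integrable_Kstar_shift[of u y] integrable_Kstar_shift[of v y] assms
  by (simp add: Bochner_Integration.integral_diff field_simps)

lemma integrable_Kstar_shift_diff:
  assumes "0 \<le> u" "u \<le> y" "0 \<le> v" "v \<le> y"
  shows "integrable mu (\<lambda>a. Kstar \<alpha> (y - u + a) - Kstar \<alpha> (y - v + a))"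
  using integrable_Kstar_shift[of u y] integrable_Kstar_shift[of v y] assms by simp

text \<open>Below 2\<alpha>, raising the rate costs less in u^2/2 than it saves in E K*, because K*' \<ge> 2\<alpha>.\<close>

lemma bellman_obj_strict_decreasing:
  assumes u: "0 \<le> u" "u < v" and v: "v \<le> y" "v \<le> 2*\<alpha>"
  shows "bellman_obj mu y v < bellman_obj mu y u"
proof -
  have "AE a in mu. 2*\<alpha>*(v - u) \<le> Kstar \<alpha> (y - u + a) - Kstar \<alpha> (y - v + a)"
    using nonneg
  proof eventually_elim
    case (elim a)
    have s: "0 \<le> y - v + a" and t: "0 \<le> y - u + a" using elim u v by auto
    have "2*\<alpha>*(v - u) \<le> Kstar_deriv \<alpha> (y - v + a) * (v - u)"
      using Kstar_deriv_ge[OF s] u by (intro mult_right_mono) auto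
    also have "\<dots> \<le> Kstar \<alpha> (y - u + a) - Kstar \<alpha> (y - v + a)"
      using Kstar_above_tangent[OF s t, of \<alpha>] by simp
    finally show ?case .
  qed
  hence "(\<integral>a. 2*\<alpha>*(v - u) \<partial>mu) \<le> (\<integral>a. Kstar \<alpha> (y - u + a) - Kstar \<alpha> (y - v + a) \<partial>mu)"
    using u v by (intro integral_mono_AE integrable_Kstar_shift_diff) auto
  hence "2*\<alpha>*(v - u) \<le> (\<integral>a. Kstar \<alpha> (y - u + a) - Kstar \<alpha> (y - v + a) \<partial>mu)"
    by (simp add: prob_space)
  moreover have "0 < (v - u) * (2*\<alpha> - (u + v)/2)" using u v by (intro mult_pos_pos) auto
  moreover have "(v - u) * (2*\<alpha> - (u + v)/2) = (u\<^sup>2 - v\<^sup>2)/2 + 2*\<alpha>*(v - u)"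
    by (simp add: power2_eq_square field_simps)
  ultimately show ?thesis
    using bellman_obj_diff[of u y v] u v by linarith
qed

lemma bellman_obj_diff_antimono:
  assumes y: "0 \<le> y" "y \<le> z" and uv: "0 \<le> u" "u \<le> v" "v \<le> y"
  shows "bellman_obj mu z v - bellman_obj mu z u \<le> bellman_obj mu y v - bellman_obj mu y u"
proof -
  have "AE a in mu. Kstar \<alpha> (z - v + a) - Kstar \<alpha> (z - u + a) \<le> Kstar \<alpha> (y - v + a) - Kstar \<alpha> (y - u + a)"
    using nonneg
  proof eventually_elim
    case (elim a)
    have "Kstar \<alpha> ((y - v + a) + (v - u)) - Kstar \<alpha> (y - v + a)
        \<le> Kstar \<alpha> ((z - v + a) + (v - u)) - Kstar \<alpha> (z - v + a)"
      using elim y uv by (intro Kstar_increment_mono) auto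
    thus ?case by (simp add: algebra_simps)
  qed
  hence "(\<integral>a. Kstar \<alpha> (z - v + a) - Kstar \<alpha> (z - u + a) \<partial>mu)
      \<le> (\<integral>a. Kstar \<alpha> (y - v + a) - Kstar \<alpha> (y - u + a) \<partial>mu)"
    using y uv by (intro integral_mono_AE integrable_Kstar_shift_diff) auto
  thus ?thesis
    using bellman_obj_diff[of v z u] bellman_obj_diff[of v y u] y uv by simp
qed

lemma bellman_obj_strict_midpoint_convex:
  assumes "0 \<le> u" "u < v" "v \<le> y"
  shows "2 * bellman_obj mu y ((u + v)/2) < bellman_obj mu y u + bellman_obj mu y v"
proof -
  define m where "m = (u + v)/2"
  have m: "0 \<le> m" "m \<le> y" using assms unfolding m_def by auto
  have "AE a in mu.
      (Kstar \<alpha> (y - m + a) - Kstar \<alpha> (y - u + a)) + (Kstar \<alpha> (y - m + a) - Kstar \<alpha> (y - v + a)) \<le> 0"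
    using nonneg
  proof eventually_elim
    case (elim a)
    have mid: "((y - u + a) + (y - v + a))/2 = y - m + a" unfolding m_def by (simp add: field_simps)
    have "2 * Kstar \<alpha> (y - m + a) \<le> Kstar \<alpha> (y - u + a) + Kstar \<alpha> (y - v + a)"
      using Kstar_midpoint_convex[of "y - u + a" "y - v + a" \<alpha>] elim assms unfolding mid by simp
    thus ?case by linarith
  qed
  hence "(\<integral>a. (Kstar \<alpha> (y - m + a) - Kstar \<alpha> (y - u + a))
             + (Kstar \<alpha> (y - m + a) - Kstar \<alpha> (y - v + a)) \<partial>mu)
      \<le> (\<integral>a. 0 \<partial>mu)"
    using assms m
    by (intro integral_mono_AE Bochner_Integration.integrable_add integrable_Kstar_shift_diff) auto
  hence "(\<integral>a. Kstar \<alpha> (y - m + a) - Kstar \<alpha> (y - u + a) \<partial>mu)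
      + (\<integral>a. Kstar \<alpha> (y - m + a) - Kstar \<alpha> (y - v + a) \<partial>mu) \<le> 0"
    using assms m by (subst Bochner_Integration.integral_add[symmetric])
      (auto intro: integrable_Kstar_shift_diff)
  moreover have "(m\<^sup>2 - u\<^sup>2)/2 + (m\<^sup>2 - v\<^sup>2)/2 = - ((u - v)\<^sup>2/4)"
    unfolding m_def by (simp add: power2_eq_square field_simps)
  moreover have "0 < (u - v)\<^sup>2" using assms by simp
  ultimately show ?thesis
    using bellman_obj_diff[of m y u] bellman_obj_diff[of m y v] assms m
    unfolding m_def[symmetric] by linarith
qed

end

locale myopic_policy = bounded_arrivals +
  fixes phi :: "real \<Rightarrow> real"
  assumes myopic: "\<And>x. 0 \<le> x \<Longrightarrow>
      0 \<le> phi x \<and> phi x \<le> x \<and> bellman_obj mu x (phi x) = bellman_err mu x"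
begin

lemma phi_nonneg: "0 \<le> y \<Longrightarrow> 0 \<le> phi y"
  and phi_le: "0 \<le> y \<Longrightarrow> phi y \<le> y"
  and bellman_err_eq: "0 \<le> y \<Longrightarrow> bellman_err mu y = bellman_obj mu y (phi y)"
  using myopic by auto

lemma bellman_obj_phi_le: "0 \<le> u \<Longrightarrow> u \<le> y \<Longrightarrow> bellman_obj mu y (phi y) \<le> bellman_obj mu y u"
  using bellman_err_le bellman_err_eq by fastforce

lemma phi_ge_min: "0 \<le> y \<Longrightarrow> min y (2*\<alpha>) \<le> phi y"
  using bellman_obj_strict_decreasing[of "phi y" "min y (2*\<alpha>)" y]
    bellman_obj_phi_le[of "min y (2*\<alpha>)" y] phi_nonneg mean_pos
  by fastforce

lemma phi_mono:
  assumes y: "0 \<le> y" "y \<le> z"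
  shows "phi y \<le> phi z"
proof (rule ccontr)
  assume "\<not> phi y \<le> phi z"
  define u where "u = phi z"
  define v where "v = phi y"
  have uv: "0 \<le> u" "u < v" "v \<le> y"
    using \<open>\<not> phi y \<le> phi z\<close> phi_nonneg[of z] phi_le[OF y(1)] y unfolding u_def v_def by auto
  have "bellman_obj mu z v - bellman_obj mu z u \<le> bellman_obj mu y v - bellman_obj mu y u"
    using uv y by (intro bellman_obj_diff_antimono) auto
  also have "\<dots> \<le> 0"
    using bellman_obj_phi_le[of u y] uv unfolding v_def by simp
  finally have "bellman_obj mu z v \<le> bellman_obj mu z u" by simp
  moreover have "bellman_obj mu z u \<le> bellman_obj mu z ((u + v)/2)"
    using bellman_obj_phi_le[of "(u + v)/2" z] uv y unfolding u_def by simp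
  moreover have "2 * bellman_obj mu z ((u + v)/2) < bellman_obj mu z u + bellman_obj mu z v"
    using uv y by (intro bellman_obj_strict_midpoint_convex) auto
  ultimately show False by linarith
qed

lemma phi_near_Kstar_deriv:
  "0 \<le> y \<Longrightarrow> (phi y - \<alpha> - sqrt (2*y + \<alpha>\<^sup>2))\<^sup>2 \<le> 2 * err_majorant y"
  using bellman_obj_bounds(1)[of "phi y" y] phi_nonneg phi_le bellman_err_eq
    bellman_err_le_majorant[of y]
  by (fastforce simp: Kstar_deriv_def algebra_simps)

definition lyap_slope :: real where
  "lyap_slope = err_const/\<alpha> + 8/3 + (err_const + 4/3 * (32/3 + 8*err_const/\<alpha>))/\<alpha>"

lemma lyap_slope_nonneg: "0 \<le> lyap_slope"
  unfolding lyap_slope_def using err_const_nonneg mean_pos by simp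

text \<open>Above 2\<alpha> the policy drains at rate \<phi>(y) - \<alpha> \<ge> \<alpha>, which is of order
  sqrt (2y + \<alpha>^2) as long as \<phi> stays close to K*'; this pays for the error majorant.\<close>

lemma err_majorant_le_drift:
  assumes y: "2*\<alpha> < y"
  shows "err_majorant y \<le> lyap_slope * (phi y - \<alpha>)"
proof -
  have y0: "0 \<le> y" using y mean_pos by simp
  define p where "p = sqrt (2*y + \<alpha>\<^sup>2)"
  define d where "d = phi y - \<alpha>"
  define P where "P = 32/3 + 8*err_const/\<alpha>"
  note p = sqrt_state_bounds[OF y0, folded p_def]
  have c0: "0 \<le> err_const" by (rule err_const_nonneg)
  have d: "\<alpha> \<le> d" using phi_ge_min[OF y0] y unfolding d_def by simp
  have near: "(d - p)\<^sup>2 \<le> 2*err_const + 8/3*p"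
    using phi_near_Kstar_deriv[OF y0] unfolding d_def p_def err_majorant_def by (simp add: algebra_simps)
  have coeffs: "0 \<le> err_const/\<alpha>" "0 \<le> (err_const + 4/3 * P)/\<alpha>"
    unfolding P_def using c0 mean_pos by auto
  have scale: "c \<le> (c/\<alpha>) * d" if "0 \<le> c" for c
    using mult_left_mono[OF d, of "c/\<alpha>"] that mean_pos by simp
  have slope: "lyap_slope * d = err_const/\<alpha> * d + 8/3 * d + (err_const + 4/3 * P)/\<alpha> * d"
    unfolding lyap_slope_def P_def by (simp add: algebra_simps)
  show ?thesis
  proof (cases "p/2 \<le> d")
    case True
    have "0 \<le> (err_const + 4/3 * P)/\<alpha> * d" using coeffs d mean_pos by (intro mult_nonneg_nonneg) auto
    thus ?thesis
      using scale[OF c0] True unfolding err_majorant_def p_def[symmetric] d_def[symmetric] slope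
      by linarith
  next
    case False
    hence "(p/2)\<^sup>2 < (p - d)\<^sup>2" using p by (intro power_strict_mono) auto
    hence "p * p < 8*err_const + 32/3*p" using near by (simp add: power2_eq_square algebra_simps)
    hence "p < 8*err_const/p + 32/3" using p by (simp add: field_simps)
    moreover have "8*err_const/p \<le> 8*err_const/\<alpha>" using p mean_pos c0 by (intro divide_left_mono) auto
    ultimately have "err_const + 4/3*p \<le> err_const + 4/3*P" unfolding P_def by simp
    moreover have "0 \<le> err_const + 4/3*P" unfolding P_def using c0 mean_pos by simp
    moreover have "0 \<le> err_const/\<alpha> * d" "0 \<le> 8/3 * d"
      using coeffs d mean_pos by (intro mult_nonneg_nonneg; simp)+
    ultimately show ?thesis
      using scale[of "err_const + 4/3*P"] unfolding err_majorant_def p_def[symmetric] d_def[symmetric] slope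
      by linarith
  qed
qed

definition lyap_const :: real where
  "lyap_const = (err_majorant (2*\<alpha>) + lyap_slope * \<alpha>) / measure mu {0}"

text \<open>At or below 2\<alpha> the policy empties the queue, so the next state is the arrival itself,
  which is 0 with probability measure mu {0}; this is where the atom at 0 pays for lyap_const.\<close>

lemma lyapunov_drift:
  assumes atom: "0 < measure mu {0}" and y: "0 \<le> y"
  shows "ennreal (err_majorant y)
      + (\<integral>\<^sup>+a. (if y - phi y + a = 0 then 0 else ennreal (lyap_slope * (y - phi y + a) + lyap_const)) \<partial>mu)
      \<le> ennreal (lyap_slope * y + lyap_const)" (is "_ + ?next \<le> _")
proof -
  have const: "0 \<le> lyap_const"
    unfolding lyap_const_def using err_majorant_nonneg[of "2*\<alpha>"] lyap_slope_nonneg mean_pos atom by simp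
  show ?thesis
  proof (cases "y \<le> 2*\<alpha>")
    case True
    hence "phi y = y" using phi_ge_min[OF y] phi_le[OF y] by simp
    have ind: "{0::real} \<in> sets mu" "UNIV - {0::real} \<in> sets mu" using sets_mu by auto
    have int_ind: "integrable mu (indicator (UNIV - {0}) :: real \<Rightarrow> real)"
      using ind by (intro integrable_real_indicator) (auto simp: less_top[symmetric])
    have "?next = (\<integral>\<^sup>+a. ennreal (lyap_slope * a + lyap_const * indicator (UNIV - {0}) a) \<partial>mu)"
      using \<open>phi y = y\<close> by (intro nn_integral_cong) (auto split: split_indicator)
    also have "\<dots> = ennreal (\<integral>a. lyap_slope * a + lyap_const * indicator (UNIV - {0}) a \<partial>mu)"
      using nonneg lyap_slope_nonneg const integrable_arrival int_ind
      by (intro nn_integral_eq_integral) (auto elim!: eventually_mono split: split_indicator)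
    also have "(\<integral>a. lyap_slope * a + lyap_const * indicator (UNIV - {0}) a \<partial>mu)
        = lyap_slope * \<alpha> + lyap_const * (1 - measure mu {0})"
      using integrable_arrival int_ind ind prob_compl[OF ind(1)]
      by (simp add: integral_arrival sets_eq_imp_space_eq[OF sets_mu])
    finally have drift: "?next = ennreal (lyap_slope * \<alpha> + lyap_const * (1 - measure mu {0}))" .
    have "lyap_const * measure mu {0} = err_majorant (2*\<alpha>) + lyap_slope * \<alpha>"
      unfolding lyap_const_def using atom by simp
    moreover have "err_majorant y \<le> err_majorant (2*\<alpha>)" using True by (rule err_majorant_mono)
    moreover have "0 \<le> lyap_slope * y" using lyap_slope_nonneg y by simp
    ultimately have ineq: "err_majorant y + (lyap_slope * \<alpha> + lyap_const * (1 - measure mu {0}))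
        \<le> lyap_slope * y + lyap_const"
      by (simp add: algebra_simps)
    have "ennreal (err_majorant y) + ennreal (lyap_slope * \<alpha> + lyap_const * (1 - measure mu {0}))
        = ennreal (err_majorant y + (lyap_slope * \<alpha> + lyap_const * (1 - measure mu {0})))"
      using err_majorant_nonneg[OF y] lyap_slope_nonneg const mean_pos prob_le_1[of "{0}"]
      by (simp add: ennreal_plus)
    also have "\<dots> \<le> ennreal (lyap_slope * y + lyap_const)"
      using ineq by (rule ennreal_leI)
    finally show ?thesis unfolding drift .
  next
    case False
    define c where "c = y - phi y"
    have c: "0 \<le> c" unfolding c_def using phi_le[OF y] by simp
    have "?next \<le> (\<integral>\<^sup>+a. ennreal (lyap_slope * (c + a) + lyap_const) \<partial>mu)"
      unfolding c_def by (intro nn_integral_mono) auto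
    also have "\<dots> = ennreal (lyap_slope * (c + \<alpha>) + lyap_const)"
      using lyap_slope_nonneg const c by (rule nn_integral_affine_arrival)
    finally have drift: "?next \<le> ennreal (lyap_slope * (c + \<alpha>) + lyap_const)" .
    have "ennreal (err_majorant y) + ennreal (lyap_slope * (c + \<alpha>) + lyap_const)
        = ennreal (err_majorant y + (lyap_slope * (c + \<alpha>) + lyap_const))"
      using err_majorant_nonneg[OF y] lyap_slope_nonneg const c mean_pos by (simp add: ennreal_plus)
    also have "\<dots> \<le> ennreal (lyap_slope * y + lyap_const)"
      using err_majorant_le_drift[of y] False unfolding c_def by (intro ennreal_leI) (simp add: algebra_simps)
    finally show ?thesis using drift by (meson add_left_mono order_trans)
  qed
qed

lemma nn_integral_bellman_err_until_tau0_le: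
  assumes atom: "0 < measure mu {0}" and x: "0 \<le> x"
  shows "(\<integral>\<^sup>+ w. (\<Sum>t. if enat t < tau0 phi x w then ennreal (bellman_err mu (Xpath phi x w t)) else 0)
           \<partial>stream_space mu) \<le> ennreal (lyap_slope * x + lyap_const)"
proof -
  define psi where "psi y = phi (max y 0)" for y
  have psi: "psi y = phi y" if "0 \<le> y" for y using that by (simp add: psi_def)
  have "mono psi" unfolding psi_def mono_def using phi_mono by simp
  hence psi_meas: "psi \<in> borel_measurable borel" by (rule borel_measurable_mono)
  have err_meas: "err_majorant \<in> borel_measurable borel"
    unfolding err_majorant_def by measurable
  have "AE w in stream_space mu. \<forall>t. Xpath phi x w t = Xpath psi x w t \<and> 0 \<le> Xpath psi x w t"
    using AE_arrivals_nonneg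
    by eventually_elim (metis Xpath_eq_on_nonneg psi phi_le x)
  hence "(\<integral>\<^sup>+ w. (\<Sum>t. if enat t < tau0 phi x w then ennreal (bellman_err mu (Xpath phi x w t)) else 0)
           \<partial>stream_space mu)
      \<le> (\<integral>\<^sup>+ w. (\<Sum>t. if enat t < tau0 psi x w then ennreal (err_majorant (Xpath psi x w t)) else 0)
           \<partial>stream_space mu)"
  proof (intro nn_integral_mono_AE, eventually_elim)
    case (elim w)
    hence "tau0 phi x w = tau0 psi x w" by (simp add: tau0_def)
    thus ?case using elim
      by (intro suminf_le summableI) (auto intro!: ennreal_leI bellman_err_le_majorant)
  qed
  also have "\<dots> \<le> ennreal (lyap_slope * x + lyap_const)"
  proof (rule nn_integral_cost_until_tau0_le[OF psi_meas err_meas])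
    fix y :: real assume y: "0 \<le> y"
    show "psi y \<le> y" using phi_le[OF y] psi[OF y] by simp
    show "ennreal (err_majorant y) + (\<integral>\<^sup>+a. (if y - psi y + a = 0 then 0
        else ennreal (lyap_slope * (y - psi y + a) + lyap_const)) \<partial>mu) \<le> ennreal (lyap_slope * y + lyap_const)"
      unfolding psi[OF y] by (rule lyapunov_drift[OF atom y])
  qed (use x in auto)
  finally show ?thesis .
qed

end

theorem lemma3:
  fixes mu :: "real measure" and N :: real and phi :: "real \<Rightarrow> real"
  assumes prob: "prob_space mu"
    and sets_mu: "sets mu = sets borel"
    and nonneg: "AE a in mu. 0 \<le> a"
    and Npos: "N > 0"
    and bounded: "AE a in mu. a < N"
    and atom0: "measure mu {0} > 0"
    and integ: "integrable mu (\<lambda>a. a)"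
    and mean_pos: "arr_mean mu > 0"
    and myopic: "\<And>x. x \<ge> 0 \<Longrightarrow>
        0 \<le> phi x \<and> phi x \<le> x \<and> bellman_obj mu x (phi x) = bellman_err mu x"
  shows "\<exists>b1 b2 :: real. \<forall>x \<ge> 0.
           (\<integral>\<^sup>+ w. (\<Sum>t. if enat t < tau0 phi x w
                         then ennreal (bellman_err mu (Xpath phi x w t)) else 0)
              \<partial>stream_space mu) \<le> ennreal (b1 * x + b2)"
proof -
  interpret myopic_policy mu N phi
    using prob sets_mu nonneg Npos bounded mean_pos myopic
    by (intro myopic_policy.intro bounded_arrivals.intro nonneg_arrivals.intro
        myopic_policy_axioms.intro bounded_arrivals_axioms.intro nonneg_arrivals_axioms.intro) auto
  show ?thesis
    using nn_integral_bellman_err_until_tau0_le[OF atom0] by blast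
qed

end
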